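(* Let $X$ be a chain connected uniform space. The following are equivalent: (a) $X$ is uniformly joinable; (b) $\pi_X\colon GP(X,x_0)\to X$ generates the uniform structure of $X$ for each $x_0\in X$; (c) $\pi_X\colon GP(X,x_0)\to X$ generates the uniform structure of $X$ for some $x_0\in X$.
   Context: Entourages are symmetric and contain the diagonal; $f(E)=\{(f(x),f(y)):(x,y)\in E\}$; a surjection generates the uniform structure of its range if the sets $f(E)$ form a base of it. $R(X,E)$ is the Rips complex (vertex set $X$, simplices the finite $F$ with $F\times F\subset E$, weak topology); $e(x,y)$ is the edge-path from $x$ to $y$ for $(x,y)\in E$. An $E$-chain is a sequence $x_0,\dots,x_n$ with $(x_i,x_{i+1})\in E$; $X$ is chain connected if for every entourage $E$ any two points are joined by an $E$-chain. Two paths $c,d$ in $R(X,E)$ with initial points $x_c,x_d\in X$ and terminal points $y_c,y_d\in X$ are $E$-homotopic if $(x_c,x_d),(y_c,y_d)\in E$ and $c$ is homotopic rel. end-points in $R(X,E)$ to $e(x_c,x_d)\ast d\ast e(y_d,y_c)$. A generalized path from $x$ to $y$ is a family $c=\{[c_E]\}_E$ indexed by all entourages, $[c_E]$ a homotopy class rel. end-points of paths from $x$ to $y$ in $R(X,E)$, such that $c_F$ is homotopic rel. end-points to $c_E$ in $R(X,E)$ whenever $F\subset E$. Inverse and concatenation are termwise. $GP(X)$ is the set of generalized paths with the uniform structure whose base consists of the sets $F^\ast$ of pairs $(c,d)$ with $c_F$ $F$-homotopic to $d_F$; $GP(X,x_0)\subset GP(X)$ consists of those starting at $x_0$; $\pi_X$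 sends a generalized path to its end-point. A generalized path $c$ from $x$ to $y$ is $F$-short if $(x,y)\in F$ and $c_F$ is homotopic rel. end-points in $R(X,F)$ to $e(x,y)$. $X$ is uniformly joinable if for each entourage $E$ there is an entourage $F$ such that any $(x,y)\in F$ are joined by an $E$-short generalized path. *)

theory Defs
  imports "HOL-Analysis.Analysis"
begin

text \<open>The uniform space X is the whole type 'a of class uniform_space.
  Entourages are symmetric members of the uniformity (they contain the diagonal
  automatically).\<close>

definition entourage :: "('a::uniform_space \<times> 'a) set \<Rightarrow> bool" where
  "entourage E \<longleftrightarrow> eventually (\<lambda>p. p \<in> E) uniformity \<and> sym E \<and> Id \<subseteq> E"

text \<open>E-chains x0,...,xn with consecutive pairs in E are exactly E^*.\<close>
definition chain_connected :: "'a::uniform_space itself \<Rightarrow> bool" where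
  "chain_connected _ \<longleftrightarrow>
     (\<forall>E::('a \<times> 'a) set. entourage E \<longrightarrow> (\<forall>x y. (x, y) \<in> E\<^sup>*))"

text \<open>Points of the geometric realisation are barycentric coordinate functions
  'a \<Rightarrow> real; a vertex x is the function that is 1 at x and 0 elsewhere.\<close>

definition vtx :: "'a \<Rightarrow> ('a \<Rightarrow> real)" where
  "vtx x = (\<lambda>v. if v = x then 1 else 0)"

definition rips_simplex :: "('a \<times> 'a) set \<Rightarrow> 'a set \<Rightarrow> bool" where
  "rips_simplex E \<sigma> \<longleftrightarrow> finite \<sigma> \<and> \<sigma> \<noteq> {} \<and> \<sigma> \<times> \<sigma> \<subseteq> E"

text \<open>Closed geometric simplex spanned by sigma (Euclidean topology = subspace of the
  product topology, since all coordinates outside the finite set sigma vanish).\<close>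
definition geom_simplex :: "'a set \<Rightarrow> ('a \<Rightarrow> real) set" where
  "geom_simplex \<sigma> = {f. (\<forall>v. 0 \<le> f v) \<and> (\<forall>v. v \<notin> \<sigma> \<longrightarrow> f v = 0) \<and> sum f \<sigma> = 1}"

definition rips_carrier :: "('a \<times> 'a) set \<Rightarrow> ('a \<Rightarrow> real) set" where
  "rips_carrier E = \<Union> {geom_simplex \<sigma> | \<sigma>. rips_simplex E \<sigma>}"

definition rips_open :: "('a \<times> 'a) set \<Rightarrow> ('a \<Rightarrow> real) set \<Rightarrow> bool" where
  "rips_open E U \<longleftrightarrow> U \<subseteq> rips_carrier E \<and>
     (\<forall>\<sigma>. rips_simplex E \<sigma> \<longrightarrow> openin (top_of_set (geom_simplex \<sigma>)) (U \<inter> geom_simplex \<sigma>))"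

lemma istopology_rips_open: "istopology (rips_open E)"
  unfolding istopology_def
proof (intro conjI allI impI)
  fix S T assume "rips_open E S" "rips_open E T"
  then show "rips_open E (S \<inter> T)"
  proof -
    have "\<And>\<sigma>. S \<inter> T \<inter> geom_simplex \<sigma> = (S \<inter> geom_simplex \<sigma>) \<inter> (T \<inter> geom_simplex \<sigma>)" by blast
    with \<open>rips_open E S\<close> \<open>rips_open E T\<close> show ?thesis
      unfolding rips_open_def by auto
  qed
next
  fix K assume K: "\<forall>U\<in>K. rips_open E U"
  show "rips_open E (\<Union>K)"
    unfolding rips_open_def
  proof (intro conjI allI impI)
    show "\<Union>K \<subseteq> rips_carrier E" using K by (auto simp: rips_open_def)
  next
    fix \<sigma> assume "rips_simplex E \<sigma>"
    then have "\<And>U. U \<in> K \<Longrightarrow> openin (top_of_set (geom_simplex \<sigma>)) (U \<inter> geom_simplex \<sigma>)"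
      using K by (auto simp: rips_open_def)
    then have "openin (top_of_set (geom_simplex \<sigma>)) (\<Union>((\<lambda>U. U \<inter> geom_simplex \<sigma>) ` K))"
      by blast
    moreover have "\<Union>((\<lambda>U. U \<inter> geom_simplex \<sigma>) ` K) = \<Union>K \<inter> geom_simplex \<sigma>" by blast
    ultimately show "openin (top_of_set (geom_simplex \<sigma>)) (\<Union>K \<inter> geom_simplex \<sigma>)" by simp
  qed
qed

definition rips :: "('a \<times> 'a) set \<Rightarrow> ('a \<Rightarrow> real) topology" where
  "rips E = topology (rips_open E)"

lemma openin_rips: "openin (rips E) U \<longleftrightarrow> rips_open E U"
  unfolding rips_def by (simp add: topology_inverse'[OF istopology_rips_open])

definition rips_homotopic :: "('a \<times> 'a) set \<Rightarrow> (real \<Rightarrow> 'a \<Rightarrow> real) \<Rightarrow> (real \<Rightarrow> 'a \<Rightarrow> real) \<Rightarrow> bool" where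
  "rips_homotopic E p q \<longleftrightarrow>
     homotopic_with (\<lambda>r. r 0 = p 0 \<and> r 1 = p 1) (top_of_set {0..1}) (rips E) p q"

definition edge_path :: "'a \<Rightarrow> 'a \<Rightarrow> real \<Rightarrow> 'a \<Rightarrow> real" where
  "edge_path x y = (\<lambda>t v. (1 - t) * vtx x v + t * vtx y v)"

definition E_homotopic :: "('a \<times> 'a) set \<Rightarrow> (real \<Rightarrow> 'a \<Rightarrow> real) \<Rightarrow> (real \<Rightarrow> 'a \<Rightarrow> real) \<Rightarrow> bool" where
  "E_homotopic E c d \<longleftrightarrow>
     (\<exists>xc xd yc yd. c 0 = vtx xc \<and> d 0 = vtx xd \<and> c 1 = vtx yc \<and> d 1 = vtx yd \<and>
        (xc, xd) \<in> E \<and> (yc, yd) \<in> E \<and>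
        rips_homotopic E c (edge_path xc xd +++ (d +++ edge_path yd yc)))"

text \<open>A generalized path assigns to every entourage E a homotopy class (a set of paths)
  rel. end-points in R(X,E); it is empty at non-entourages.\<close>
type_synonym 'a gpath = "('a \<times> 'a) set \<Rightarrow> (real \<Rightarrow> 'a \<Rightarrow> real) set"

definition is_gpath :: "'a::uniform_space gpath \<Rightarrow> 'a \<Rightarrow> 'a \<Rightarrow> bool" where
  "is_gpath c x y \<longleftrightarrow>
     (\<forall>E. entourage E \<longrightarrow>
        (\<exists>p. pathin (rips E) p \<and> p 0 = vtx x \<and> p 1 = vtx y \<and> c E = {q. rips_homotopic E p q})) \<and>
     (\<forall>E. \<not> entourage E \<longrightarrow> c E = {}) \<and>
     (\<forall>E F. entourage E \<and> entourage F \<and> F \<subseteq> E \<longrightarrow>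
        (\<forall>p \<in> c F. \<forall>q \<in> c E. rips_homotopic E p q))"

definition GP :: "'a::uniform_space gpath set" where
  "GP = {c. \<exists>x y. is_gpath c x y}"

definition GP_at :: "'a::uniform_space \<Rightarrow> 'a gpath set" where
  "GP_at x0 = {c. \<exists>y. is_gpath c x0 y}"

definition gp_end :: "'a::uniform_space gpath \<Rightarrow> 'a" where
  "gp_end c = (THE y. \<exists>x. is_gpath c x y)"

definition GP_star :: "('a::uniform_space \<times> 'a) set \<Rightarrow> ('a gpath \<times> 'a gpath) set" where
  "GP_star F = {(c, d). c \<in> GP \<and> d \<in> GP \<and> (\<exists>p \<in> c F. \<exists>q \<in> d F. E_homotopic F p q)}"

definition is_short :: "('a::uniform_space \<times> 'a) set \<Rightarrow> 'a gpath \<Rightarrow> 'a \<Rightarrow> 'a \<Rightarrow> bool" where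
  "is_short F c x y \<longleftrightarrow> is_gpath c x y \<and> (x, y) \<in> F \<and>
     (\<exists>p \<in> c F. rips_homotopic F p (edge_path x y))"

definition uniformly_joinable :: "'a::uniform_space itself \<Rightarrow> bool" where
  "uniformly_joinable _ \<longleftrightarrow>
     (\<forall>E::('a \<times> 'a) set. entourage E \<longrightarrow>
        (\<exists>F. entourage F \<and> (\<forall>x y. (x, y) \<in> F \<longrightarrow> (\<exists>c. is_short E c x y))))"

definition pi_image :: "'a::uniform_space \<Rightarrow> ('a \<times> 'a) set \<Rightarrow> ('a \<times> 'a) set" where
  "pi_image x0 F = {(gp_end c, gp_end d) | c d. c \<in> GP_at x0 \<and> d \<in> GP_at x0 \<and> (c, d) \<in> GP_star F}"

definition pi_generates :: "'a::uniform_space \<Rightarrow> bool" where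
  "pi_generates x0 \<longleftrightarrow>
     gp_end ` GP_at x0 = UNIV \<and>
     (\<forall>F. entourage F \<longrightarrow> eventually (\<lambda>p. p \<in> pi_image x0 F) uniformity) \<and>
     (\<forall>E. entourage E \<longrightarrow> (\<exists>F. entourage F \<and> pi_image x0 F \<subseteq> E))"

end

theory Submission
  imports Defs
begin

section \<open>Path homotopy in an arbitrary topological space\<close>

text \<open>Homotopy of paths relative to the end-points, in any topology (the Rips complex
  carries the weak topology, so the Euclidean-space library notion does not apply).\<close>
definition path_homotopic :: "'b topology \<Rightarrow> (real \<Rightarrow> 'b) \<Rightarrow> (real \<Rightarrow> 'b) \<Rightarrow> bool" where
  "path_homotopic T p q \<longleftrightarrow>
     homotopic_with (\<lambda>r. r 0 = p 0 \<and> r 1 = p 1) (top_of_set {0..1}) T p q"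

lemma path_homotopic_imp:
  assumes "path_homotopic T p q"
  shows "pathin T p \<and> pathin T q \<and> q 0 = p 0 \<and> q 1 = p 1"
  using homotopic_with_imp_continuous_maps[OF assms[unfolded path_homotopic_def]]
    homotopic_with_imp_property[OF assms[unfolded path_homotopic_def]]
  by (simp add: pathin_def)

lemma path_homotopic_refl: "pathin T p \<Longrightarrow> path_homotopic T p p"
  unfolding path_homotopic_def pathin_def by simp

lemma path_homotopic_sym:
  assumes "path_homotopic T p q"
  shows "path_homotopic T q p"
proof -
  have "q 0 = p 0" "q 1 = p 1" using path_homotopic_imp[OF assms] by auto
  then show ?thesis using assms unfolding path_homotopic_def by (simp add: homotopic_with_sym)
qed

lemma path_homotopic_trans [trans]:
  assumes "path_homotopic T p q" "path_homotopic T q r"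
  shows "path_homotopic T p r"
proof -
  have ends: "q 0 = p 0" "q 1 = p 1" using path_homotopic_imp[OF assms(1)] by auto
  show ?thesis
    using assms unfolding path_homotopic_def ends using homotopic_with_trans by blast
qed

lemma path_homotopic_map:
  assumes "path_homotopic T p q" "continuous_map T T' f"
  shows "path_homotopic T' (f \<circ> p) (f \<circ> q)"
  using assms unfolding path_homotopic_def
  by (rule homotopic_with_compose_continuous_map_left) auto

text \<open>Two reparametrizations of a path by self-maps of [0,1] with the same end-points
  are homotopic (via the straight-line homotopy of the parameters).  All groupoid laws
  below are instances.\<close>
lemma path_homotopic_reparam:
  assumes p: "pathin T p" and cf: "continuous_on {0..1} f" and cg: "continuous_on {0..1} g"
    and fr: "f ` {0..1} \<subseteq> {0..1}" and gr: "g ` {0..1} \<subseteq> {0..1}"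
    and e0: "f 0 = g 0" and e1: "f 1 = g 1"
  shows "path_homotopic T (p \<circ> f) (p \<circ> g)"
proof -
  define k where "k = (\<lambda>z::real \<times> real. (1 - fst z) * f (snd z) + fst z * g (snd z))"
  have convex: "(1 - s) * a + s * b \<in> {0..1}" if "a \<in> {0..1}" "b \<in> {0..1}" "s \<in> {0..1}"
    for a b s :: real
  proof -
    have "(1 - s) * a \<le> 1 - s" "s * b \<le> s" using that by (simp_all add: mult_left_le)
    then show ?thesis using that by auto
  qed
  have "continuous_on ({0..1} \<times> {0..1}) k"
    unfolding k_def
    by (intro continuous_intros continuous_on_compose2[OF cf] continuous_on_compose2[OF cg]) auto
  moreover have "k ` ({0..1} \<times> {0..1}) \<subseteq> {0..1}"
  proof (rule image_subsetI)
    fix z :: "real \<times> real" assume "z \<in> {0..1} \<times> {0..1}"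
    then have "fst z \<in> {0..1}" "snd z \<in> {0..1}" by (auto simp: mem_Times_iff)
    then have "f (snd z) \<in> {0..1}" "g (snd z) \<in> {0..1}" "fst z \<in> {0..1}" using fr gr by blast+
    then show "k z \<in> {0..1}" unfolding k_def by (rule convex)
  qed
  ultimately have "continuous_map (prod_topology (top_of_set {0..1}) (top_of_set {0..1}))
                     (top_of_set {0..1}) k"
    by (simp add: continuous_map_in_subtopology image_subset_iff_funcset)
  then have "continuous_map (prod_topology (top_of_set {0..1}) (top_of_set {0..1})) T (p \<circ> k)"
    using p unfolding pathin_def by (rule continuous_map_compose)
  moreover have "(1 - t) * a + t * a = a" for t a :: real
    by (simp add: algebra_simps)
  ultimately show ?thesis
    unfolding path_homotopic_def homotopic_with_def using e0 e1
    by (intro exI[of _ "p \<circ> k"]) (simp add: k_def)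
qed

lemma path_homotopic_reparam_id:
  assumes "pathin T p" "continuous_on {0..1} f" "f ` {0..1} \<subseteq> {0..1}" "f 0 = 0" "f 1 = 1"
  shows "path_homotopic T (p \<circ> f) p"
  using path_homotopic_reparam[OF assms(1,2) continuous_on_id assms(3)] assms(4,5) by (simp add: o_def)

text \<open>A stretch of the second coordinate of the unit square, used to glue homotopies.\<close>
lemma interval_square_stretch:
  fixes a b :: real
  assumes "\<And>z. z \<in> S \<Longrightarrow> a * snd z + b \<in> {0..1}"
  shows "continuous_map (subtopology (prod_topology (top_of_set {0..1}) (top_of_set {0..1})) S)
           (prod_topology (top_of_set {0..1}) (top_of_set {0..1})) (\<lambda>z. (fst z, a * snd z + b))"
  using assms
  by (auto simp: continuous_map_in_subtopology continuous_map_from_subtopology subtopology_subtopology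
      intro!: continuous_intros)

text \<open>Concatenation respects path homotopy: run the homotopy for the first factor on the
  lower half of the parameter interval and the one for the second on the upper half.\<close>
lemma path_homotopic_join:
  assumes ha: "path_homotopic T a a'" and hb: "path_homotopic T b b'" and ab: "a 1 = b 0"
  shows "path_homotopic T (a +++ b) (a' +++ b')"
proof -
  let ?I = "top_of_set {0..1::real}"
  obtain h1 where h1: "continuous_map (prod_topology ?I ?I) T h1"
    "\<forall>s. h1 (0, s) = a s" "\<forall>s. h1 (1, s) = a' s" "\<forall>t\<in>{0..1}. h1 (t, 0) = a 0 \<and> h1 (t, 1) = a 1"
    using ha unfolding path_homotopic_def homotopic_with_def by auto
  obtain h2 where h2: "continuous_map (prod_topology ?I ?I) T h2"
    "\<forall>s. h2 (0, s) = b s" "\<forall>s. h2 (1, s) = b' s" "\<forall>t\<in>{0..1}. h2 (t, 0) = b 0 \<and> h2 (t, 1) = b 1"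
    using hb unfolding path_homotopic_def homotopic_with_def by auto
  define k where "k z = (if snd z \<le> 1/2 then h1 (fst z, 2 * snd z + 0) else h2 (fst z, 2 * snd z + -1))"
    for z :: "real \<times> real"
  have "continuous_map (prod_topology ?I ?I) T k"
    unfolding k_def
  proof (rule continuous_map_cases_le)
    show "continuous_map (prod_topology ?I ?I) euclideanreal snd"
      using continuous_map_snd continuous_map_in_subtopology by blast
    show "continuous_map (subtopology (prod_topology ?I ?I)
            {z \<in> topspace (prod_topology ?I ?I). snd z \<le> 1/2}) T (\<lambda>z. h1 (fst z, 2 * snd z + 0))"
      by (rule continuous_map_compose[OF interval_square_stretch h1(1), unfolded o_def]) auto
    show "continuous_map (subtopology (prod_topology ?I ?I)
            {z \<in> topspace (prod_topology ?I ?I). 1/2 \<le> snd z}) T (\<lambda>z. h2 (fst z, 2 * snd z + -1))"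
      by (rule continuous_map_compose[OF interval_square_stretch h2(1), unfolded o_def]) auto
    show "h1 (fst z, 2 * snd z + 0) = h2 (fst z, 2 * snd z + -1)"
      if "z \<in> topspace (prod_topology ?I ?I)" "snd z = 1/2" for z
    proof -
      have "2 * snd z = 1" "2 * snd z - 1 = 0" using that(2) by simp_all
      then show ?thesis using that(1) h1(4) h2(4) ab by (auto simp: mem_Times_iff)
    qed
  qed simp
  moreover have "(a +++ b) 0 = a 0" "(a +++ b) 1 = b 1"
    by (simp_all add: joinpaths_def)
  ultimately show ?thesis
    unfolding path_homotopic_def homotopic_with_def
    using h1 h2 by (intro exI[of _ k]) (auto simp: k_def joinpaths_def)
qed

lemma path_homotopic_reverse:
  assumes "path_homotopic T a a'"
  shows "path_homotopic T (reversepath a) (reversepath a')"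
proof -
  have "continuous_map (top_of_set {0..1::real}) (top_of_set {0..1}) (\<lambda>t. 1 - t)"
    by (auto simp: continuous_map_in_subtopology intro!: continuous_intros)
  from homotopic_with_compose_continuous_map_right[OF assms[unfolded path_homotopic_def] this]
  show ?thesis unfolding path_homotopic_def reversepath_def o_def by simp
qed

lemma pathin_join: "pathin T a \<Longrightarrow> pathin T b \<Longrightarrow> a 1 = b 0 \<Longrightarrow> pathin T (a +++ b)"
  using path_homotopic_join[OF path_homotopic_refl path_homotopic_refl] path_homotopic_imp by blast

lemma pathin_reverse: "pathin T a \<Longrightarrow> pathin T (reversepath a)"
  using path_homotopic_reverse[OF path_homotopic_refl] path_homotopic_imp by blast

lemma path_homotopic_lunit:
  assumes "pathin T p"
  shows "path_homotopic T ((\<lambda>t. p 0) +++ p) p"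
proof -
  have "(\<lambda>t. p 0) +++ p = p \<circ> (\<lambda>t. max 0 (2 * t - 1))"
  proof
    fix t :: real
    show "((\<lambda>t. p 0) +++ p) t = (p \<circ> (\<lambda>t. max 0 (2 * t - 1))) t"
    proof (cases rule: linorder_cases[of t "1/2"])
      case equal
      then have "2 * t - 1 = 0" "2 * t = 1" by simp_all
      then show ?thesis by (simp add: joinpaths_def max_def)
    qed (simp_all add: joinpaths_def max_def)
  qed
  moreover have "path_homotopic T (p \<circ> (\<lambda>t. max 0 (2 * t - 1))) p"
    by (rule path_homotopic_reparam_id[OF assms]) (auto intro!: continuous_intros)
  ultimately show ?thesis by simp
qed

lemma path_homotopic_runit:
  assumes "pathin T p"
  shows "path_homotopic T (p +++ (\<lambda>t. p 1)) p"
proof -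
  have "p +++ (\<lambda>t. p 1) = p \<circ> (\<lambda>t. min 1 (2 * t))"
  proof
    fix t :: real
    show "(p +++ (\<lambda>t. p 1)) t = (p \<circ> (\<lambda>t. min 1 (2 * t))) t"
    proof (cases rule: linorder_cases[of t "1/2"])
      case equal
      then have "2 * t - 1 = 0" "2 * t = 1" by simp_all
      then show ?thesis by (simp add: joinpaths_def min_def)
    qed (simp_all add: joinpaths_def min_def)
  qed
  moreover have "path_homotopic T (p \<circ> (\<lambda>t. min 1 (2 * t))) p"
    by (rule path_homotopic_reparam_id[OF assms]) (auto intro!: continuous_intros)
  ultimately show ?thesis by simp
qed

lemma path_homotopic_rinv:
  assumes "pathin T p"
  shows "path_homotopic T (p +++ reversepath p) (\<lambda>t. p 0)"
proof -
  have "p +++ reversepath p = p \<circ> (\<lambda>t. 1 - \<bar>1 - 2 * t\<bar>)"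
    by (auto simp: joinpaths_def reversepath_def fun_eq_iff abs_if)
  moreover have "path_homotopic T (p \<circ> (\<lambda>t. 1 - \<bar>1 - 2 * t\<bar>)) (p \<circ> (\<lambda>t. 0))"
    by (rule path_homotopic_reparam[OF assms]) (auto intro!: continuous_intros)
  ultimately show ?thesis by (simp add: o_def)
qed

lemma path_homotopic_linv:
  assumes "pathin T p"
  shows "path_homotopic T (reversepath p +++ p) (\<lambda>t. p 1)"
proof -
  have "reversepath p +++ p = p \<circ> (\<lambda>t. \<bar>1 - 2 * t\<bar>)"
    by (auto simp: joinpaths_def reversepath_def fun_eq_iff abs_if)
  moreover have "path_homotopic T (p \<circ> (\<lambda>t. \<bar>1 - 2 * t\<bar>)) (p \<circ> (\<lambda>t. 1))"
    by (rule path_homotopic_reparam[OF assms]) (auto intro!: continuous_intros)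
  ultimately show ?thesis by (simp add: o_def)
qed

lemma joinpaths_assoc_reparam:
  "(a +++ b) +++ c = (a +++ (b +++ c)) \<circ> (\<lambda>t. min (2 * t) (min (t + 1/4) ((t + 1) / 2)))"
proof
  fix t :: real
  consider "t \<le> 1/4" | "1/4 < t" "t \<le> 1/2" | "1/2 < t" by linarith
  then show "((a +++ b) +++ c) t = ((a +++ (b +++ c)) \<circ> (\<lambda>t. min (2 * t) (min (t + 1/4) ((t + 1) / 2)))) t"
  proof cases
    case 1
    then have "min (2 * t) (min (t + 1/4) ((t + 1) / 2)) = 2 * t" by auto
    then show ?thesis using 1 by (simp add: joinpaths_def)
  next
    case 2
    then have "min (2 * t) (min (t + 1/4) ((t + 1) / 2)) = t + 1/4"
      and "2 * (2 * (t + 1/4) - 1) = 2 * (2 * t) - 1" by auto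
    then show ?thesis using 2 by (simp add: joinpaths_def)
  next
    case 3
    then have "min (2 * t) (min (t + 1/4) ((t + 1) / 2)) = (t + 1) / 2"
      and "2 * ((t + 1) / 2) - 1 = t" by (auto simp: field_simps)
    then show ?thesis using 3 by (simp add: joinpaths_def)
  qed
qed

lemma path_homotopic_assoc:
  assumes "pathin T a" "pathin T b" "pathin T c" "a 1 = b 0" "b 1 = c 0"
  shows "path_homotopic T ((a +++ b) +++ c) (a +++ (b +++ c))"
proof -
  have path: "pathin T (a +++ (b +++ c))"
    using assms by (intro pathin_join) (auto simp: joinpaths_def)
  have range: "(\<lambda>t::real. min (2 * t) (min (t + 1/4) ((t + 1) / 2))) ` {0..1} \<subseteq> {0..1}"
    by (auto simp: min_def)
  show ?thesis
    unfolding joinpaths_assoc_reparam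
    by (rule path_homotopic_reparam_id[OF path _ range]) (auto intro!: continuous_intros)
qed

section \<open>Rips complexes\<close>

lemma simplex_subset_rips_carrier: "rips_simplex E \<sigma> \<Longrightarrow> geom_simplex \<sigma> \<subseteq> rips_carrier E"
  unfolding rips_carrier_def by blast

lemma topspace_rips: "topspace (rips E) = rips_carrier E"
proof -
  have "rips_open E (rips_carrier E)"
    unfolding rips_open_def
  proof (intro conjI allI impI)
    fix \<sigma> assume "rips_simplex E \<sigma>"
    then have "rips_carrier E \<inter> geom_simplex \<sigma> = geom_simplex \<sigma>"
      using simplex_subset_rips_carrier by blast
    then show "openin (top_of_set (geom_simplex \<sigma>)) (rips_carrier E \<inter> geom_simplex \<sigma>)" by simp
  qed simp
  then show ?thesis unfolding topspace_def openin_rips by (auto simp: rips_open_def)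
qed

lemma continuous_map_simplex_inclusion:
  assumes "rips_simplex E \<sigma>"
  shows "continuous_map (top_of_set (geom_simplex \<sigma>)) (rips E) (\<lambda>x. x)"
  unfolding continuous_map_def
proof (intro conjI allI impI)
  show "(\<lambda>x. x) \<in> topspace (top_of_set (geom_simplex \<sigma>)) \<rightarrow> topspace (rips E)"
    using simplex_subset_rips_carrier[OF assms] by (auto simp: topspace_rips)
  fix U assume "openin (rips E) U"
  then have "openin (top_of_set (geom_simplex \<sigma>)) (U \<inter> geom_simplex \<sigma>)"
    using assms by (simp add: openin_rips rips_open_def)
  moreover have "{x \<in> topspace (top_of_set (geom_simplex \<sigma>)). x \<in> U} = U \<inter> geom_simplex \<sigma>" by auto
  ultimately show "openin (top_of_set (geom_simplex \<sigma>)) {x \<in> topspace (top_of_set (geom_simplex \<sigma>)). x \<in> U}"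
    by simp
qed

lemma continuous_map_rips_inclusion:
  assumes "F \<subseteq> E"
  shows "continuous_map (rips F) (rips E) (\<lambda>x. x)"
  unfolding continuous_map_def
proof (intro conjI allI impI)
  have simplex: "rips_simplex F \<sigma> \<Longrightarrow> rips_simplex E \<sigma>" for \<sigma>
    using assms by (auto simp: rips_simplex_def)
  then show "(\<lambda>x. x) \<in> topspace (rips F) \<rightarrow> topspace (rips E)"
    unfolding topspace_rips rips_carrier_def by blast
  fix U assume "openin (rips E) U"
  then have U: "rips_open E U" by (simp add: openin_rips)
  have "rips_open F (U \<inter> rips_carrier F)"
    unfolding rips_open_def
  proof (intro conjI allI impI)
    fix \<sigma> assume \<sigma>: "rips_simplex F \<sigma>"
    then have "U \<inter> rips_carrier F \<inter> geom_simplex \<sigma> = U \<inter> geom_simplex \<sigma>"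
      using simplex_subset_rips_carrier by blast
    then show "openin (top_of_set (geom_simplex \<sigma>)) (U \<inter> rips_carrier F \<inter> geom_simplex \<sigma>)"
      using U simplex[OF \<sigma>] by (simp add: rips_open_def)
  qed simp
  moreover have "{x \<in> topspace (rips F). x \<in> U} = U \<inter> rips_carrier F" by (auto simp: topspace_rips)
  ultimately show "openin (rips F) {x \<in> topspace (rips F). x \<in> U}" by (simp add: openin_rips)
qed

lemma path_homotopic_rips_mono:
  "F \<subseteq> E \<Longrightarrow> path_homotopic (rips F) p q \<Longrightarrow> path_homotopic (rips E) p q"
  using path_homotopic_map[OF _ continuous_map_rips_inclusion, of F p q E] by (simp add: o_def)

lemma rips_homotopic_eq: "rips_homotopic E = path_homotopic (rips E)"
  by (simp add: fun_eq_iff rips_homotopic_def path_homotopic_def)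

lemma vtx_inject: "vtx x = vtx y \<Longrightarrow> x = y"
  by (metis vtx_def zero_neq_one)

lemma edge_path_refl: "edge_path x x = (\<lambda>t. vtx x)"
  by (simp add: edge_path_def fun_eq_iff algebra_simps)

lemma reversepath_edge_path: "reversepath (edge_path x y) = edge_path y x"
  by (simp add: edge_path_def reversepath_def fun_eq_iff algebra_simps)

lemma edge_path_ends [simp]: "edge_path x y 0 = vtx x" "edge_path x y 1 = vtx y"
  by (simp_all add: edge_path_def fun_eq_iff)

text \<open>For (x,y) in E, the edge-path e(x,y) runs through the 1-simplex {x,y} of R(X,E).\<close>
lemma pathin_edge_path:
  assumes "entourage E" "(x, y) \<in> E"
  shows "pathin (rips E) (edge_path x y)"
proof -
  have \<sigma>: "rips_simplex E {x, y}"
    using assms by (auto simp: rips_simplex_def sym_def entourage_def)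
  have "continuous_on {0..1} (edge_path x y)"
    unfolding edge_path_def by (intro continuous_on_coordinatewise_then_product continuous_intros)
  moreover have "edge_path x y t \<in> geom_simplex {x, y}" if "t \<in> {0..1}" for t
    using that by (cases "x = y") (auto simp: geom_simplex_def edge_path_def vtx_def)
  ultimately have "pathin (top_of_set (geom_simplex {x, y})) (edge_path x y)"
    by (auto simp: pathin_canon_iff path_def)
  then show ?thesis
    using pathin_compose[OF _ continuous_map_simplex_inclusion[OF \<sigma>]] by (simp add: o_def)
qed

lemma vtx_in_topspace_rips: "entourage E \<Longrightarrow> vtx x \<in> topspace (rips E)"
  using path_start_in_topspace[OF pathin_edge_path[of E x x]] by (auto simp: entourage_def)

section \<open>Generalized paths\<close>

lemma entourage_UNIV: "entourage (UNIV :: ('a::uniform_space \<times> 'a) set)"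
  by (simp add: entourage_def sym_def)

lemma gpath_class:
  assumes "is_gpath c x y" "entourage E"
  shows "\<exists>p. pathin (rips E) p \<and> p 0 = vtx x \<and> p 1 = vtx y \<and> c E = {q. path_homotopic (rips E) p q}"
  using assms unfolding is_gpath_def rips_homotopic_eq by blast

lemma gpath_member:
  assumes "is_gpath c x y" "entourage E" "q \<in> c E"
  shows "pathin (rips E) q \<and> q 0 = vtx x \<and> q 1 = vtx y"
  using gpath_class[OF assms(1,2)] assms(3) path_homotopic_imp by fastforce

lemma gpath_members_homotopic:
  assumes "is_gpath c x y" "entourage E" "q \<in> c E" "r \<in> c E"
  shows "path_homotopic (rips E) q r"
  using gpath_class[OF assms(1,2)] assms(3,4) path_homotopic_sym path_homotopic_trans by blast

definition gp_rep :: "'a::uniform_space gpath \<Rightarrow> ('a \<times> 'a) set \<Rightarrow> real \<Rightarrow> 'a \<Rightarrow> real" where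
  "gp_rep c E = (SOME p. p \<in> c E)"

lemma gp_rep_in:
  assumes "is_gpath c x y" "entourage E"
  shows "gp_rep c E \<in> c E"
proof -
  obtain p where "pathin (rips E) p" "c E = {q. path_homotopic (rips E) p q}"
    using gpath_class[OF assms] by blast
  then have "p \<in> c E" by (simp add: path_homotopic_refl)
  then show ?thesis unfolding gp_rep_def by (rule someI[where P = "\<lambda>p. p \<in> c E"])
qed

lemma gp_rep:
  assumes "is_gpath c x y" "entourage E"
  shows "pathin (rips E) (gp_rep c E) \<and> gp_rep c E 0 = vtx x \<and> gp_rep c E 1 = vtx y"
  using gpath_member[OF assms gp_rep_in[OF assms]] .

lemma gp_rep_coherent:
  assumes "is_gpath c x y" "entourage E" "entourage F" "F \<subseteq> E"
  shows "path_homotopic (rips E) (gp_rep c F) (gp_rep c E)"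
  using assms gp_rep_in[OF assms(1,2)] gp_rep_in[OF assms(1,3)]
  unfolding is_gpath_def rips_homotopic_eq by blast

text \<open>End-points of a generalized path are determined (read off at the entourage UNIV).\<close>
lemma gpath_ends_unique:
  assumes "is_gpath c x y" "is_gpath c x' y'"
  shows "x = x' \<and> y = y'"
  using gp_rep[OF assms(1) entourage_UNIV] gp_rep[OF assms(2) entourage_UNIV] vtx_inject by metis

lemma gp_end_eq: "is_gpath c x y \<Longrightarrow> gp_end c = y"
  unfolding gp_end_def using gpath_ends_unique by blast

definition gpath_of :: "(('a::uniform_space \<times> 'a) set \<Rightarrow> real \<Rightarrow> 'a \<Rightarrow> real) \<Rightarrow> 'a gpath" where
  "gpath_of P = (\<lambda>E. if entourage E then {q. path_homotopic (rips E) (P E) q} else {})"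

lemma is_gpath_gpath_of:
  assumes paths: "\<And>E. entourage E \<Longrightarrow> pathin (rips E) (P E) \<and> P E 0 = vtx x \<and> P E 1 = vtx y"
    and coherent: "\<And>E F. entourage E \<Longrightarrow> entourage F \<Longrightarrow> F \<subseteq> E \<Longrightarrow> path_homotopic (rips E) (P F) (P E)"
  shows "is_gpath (gpath_of P) x y"
  unfolding is_gpath_def rips_homotopic_eq
proof (intro conjI allI impI ballI)
  fix E :: "('a \<times> 'a) set" assume "entourage E"
  then show "\<exists>p. pathin (rips E) p \<and> p 0 = vtx x \<and> p 1 = vtx y \<and> gpath_of P E = {q. path_homotopic (rips E) p q}"
    using paths by (auto simp: gpath_of_def)
next
  fix E F :: "('a \<times> 'a) set" and p q
  assume EF: "entourage E \<and> entourage F \<and> F \<subseteq> E" and "p \<in> gpath_of P F" "q \<in> gpath_of P E"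
  then have "path_homotopic (rips E) (P F) p" "path_homotopic (rips E) (P E) q"
    using path_homotopic_rips_mono[of F E] by (auto simp: gpath_of_def)
  then show "path_homotopic (rips E) p q"
    using coherent EF path_homotopic_sym path_homotopic_trans by meson
qed (simp add: gpath_of_def)

lemma gpath_of_in: "entourage E \<Longrightarrow> pathin (rips E) (P E) \<Longrightarrow> P E \<in> gpath_of P E"
  by (simp add: gpath_of_def path_homotopic_refl)

lemma gp_rep_gpath_of:
  "is_gpath (gpath_of P) x y \<Longrightarrow> entourage E \<Longrightarrow> path_homotopic (rips E) (P E) (gp_rep (gpath_of P) E)"
  using gp_rep_in by (fastforce simp: gpath_of_def)

definition gconst :: "'a::uniform_space \<Rightarrow> 'a gpath" where
  "gconst x = gpath_of (\<lambda>E t. vtx x)"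

lemma is_gpath_gconst: "is_gpath (gconst x) x x"
  unfolding gconst_def
  by (rule is_gpath_gpath_of) (auto simp: vtx_in_topspace_rips path_homotopic_refl)

definition gcat :: "'a::uniform_space gpath \<Rightarrow> 'a gpath \<Rightarrow> 'a gpath" where
  "gcat c d = gpath_of (\<lambda>E. gp_rep c E +++ gp_rep d E)"

lemma is_gpath_gcat:
  assumes c: "is_gpath c x y" and d: "is_gpath d y z"
  shows "is_gpath (gcat c d) x z"
  unfolding gcat_def
proof (rule is_gpath_gpath_of)
  fix E :: "('a \<times> 'a) set" assume E: "entourage E"
  show "pathin (rips E) (gp_rep c E +++ gp_rep d E) \<and>
        (gp_rep c E +++ gp_rep d E) 0 = vtx x \<and> (gp_rep c E +++ gp_rep d E) 1 = vtx z"
  proof -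
    have "pathin (rips E) (gp_rep c E +++ gp_rep d E)"
      using gp_rep[OF c E] gp_rep[OF d E] by (intro pathin_join) auto
    then show ?thesis using gp_rep[OF c E] gp_rep[OF d E] by (simp add: joinpaths_def)
  qed
next
  fix E F :: "('a \<times> 'a) set" assume EF: "entourage E" "entourage F" "F \<subseteq> E"
  show "path_homotopic (rips E) (gp_rep c F +++ gp_rep d F) (gp_rep c E +++ gp_rep d E)"
    using gp_rep_coherent[OF c EF] gp_rep_coherent[OF d EF] gp_rep[OF c EF(2)] gp_rep[OF d EF(2)]
    by (intro path_homotopic_join) auto
qed

lemma gcat_in:
  assumes "is_gpath c x y" "is_gpath d y z" "entourage E"
  shows "gp_rep c E +++ gp_rep d E \<in> gcat c d E"
  unfolding gcat_def
  using gp_rep[OF assms(1,3)] gp_rep[OF assms(2,3)] assms(3)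
  by (intro gpath_of_in[where P = "\<lambda>E. gp_rep c E +++ gp_rep d E"]) (auto intro: pathin_join)

definition ginv :: "'a::uniform_space gpath \<Rightarrow> 'a gpath" where
  "ginv c = gpath_of (\<lambda>E. reversepath (gp_rep c E))"

lemma is_gpath_ginv:
  assumes c: "is_gpath c x y"
  shows "is_gpath (ginv c) y x"
  unfolding ginv_def
proof (rule is_gpath_gpath_of)
  fix E :: "('a \<times> 'a) set" assume E: "entourage E"
  show "pathin (rips E) (reversepath (gp_rep c E)) \<and>
        reversepath (gp_rep c E) 0 = vtx y \<and> reversepath (gp_rep c E) 1 = vtx x"
    using gp_rep[OF c E] pathin_reverse by (auto simp: reversepath_def)
next
  fix E F :: "('a \<times> 'a) set" assume EF: "entourage E" "entourage F" "F \<subseteq> E"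
  show "path_homotopic (rips E) (reversepath (gp_rep c F)) (reversepath (gp_rep c E))"
    using gp_rep_coherent[OF c EF] by (rule path_homotopic_reverse)
qed

lemma gp_rep_ginv:
  assumes "is_gpath c x y" "entourage E"
  shows "path_homotopic (rips E) (gp_rep (ginv c) E) (reversepath (gp_rep c E))"
  using gp_rep_gpath_of[OF is_gpath_ginv[OF assms(1), unfolded ginv_def] assms(2)]
  by (simp add: ginv_def path_homotopic_sym)

section \<open>Short generalized paths and the basic entourages of GP(X,x0)\<close>

text \<open>If r is homotopic to e(x,y), then p is homotopic to e(x0,x0).((p.r).e(y,x)):
  the shape required for p and p.r to be E-homotopic.\<close>
lemma path_homotopic_append_edge:
  assumes p: "pathin T p" "p 0 = vtx x0" "p 1 = vtx x"
    and r: "path_homotopic T r (edge_path x y)" and e: "pathin T (edge_path x y)"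
  shows "path_homotopic T p (edge_path x0 x0 +++ ((p +++ r) +++ edge_path y x))"
proof -
  let ?e = "edge_path x y"
  have r_ends: "r 0 = vtx x" "r 1 = vtx y" using path_homotopic_imp[OF r] by auto
  have e': "pathin T (reversepath ?e)" using e by (rule pathin_reverse)
  have "path_homotopic T (p +++ r) (p +++ ?e)"
    by (rule path_homotopic_join[OF path_homotopic_refl[OF p(1)] r]) (simp add: p r_ends)
  then have "path_homotopic T ((p +++ r) +++ edge_path y x) ((p +++ ?e) +++ reversepath ?e)"
    unfolding reversepath_edge_path[of x y, symmetric]
    by (rule path_homotopic_join[OF _ path_homotopic_refl[OF e']]) (simp add: r_ends joinpaths_def reversepath_def)
  also have "path_homotopic T \<dots> (p +++ (?e +++ reversepath ?e))"
    by (rule path_homotopic_assoc[OF p(1) e e']) (simp_all add: p reversepath_def)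
  also have "path_homotopic T \<dots> (p +++ (\<lambda>t. ?e 0))"
    by (rule path_homotopic_join[OF path_homotopic_refl[OF p(1)] path_homotopic_rinv[OF e]])
      (simp add: p joinpaths_def)
  also have "path_homotopic T \<dots> p"
    using path_homotopic_runit[OF p(1)] by (simp add: p)
  finally have cancel: "path_homotopic T ((p +++ r) +++ edge_path y x) p" .
  have const: "pathin T (edge_path x0 x0)"
    using path_start_in_topspace[OF p(1)] by (simp add: edge_path_refl p)
  have "path_homotopic T (edge_path x0 x0 +++ ((p +++ r) +++ edge_path y x)) (edge_path x0 x0 +++ p)"
    by (rule path_homotopic_join[OF path_homotopic_refl[OF const] cancel])
      (simp add: joinpaths_def r_ends p)
  also have "path_homotopic T \<dots> p"
    using path_homotopic_lunit[OF p(1)] by (simp add: edge_path_refl p)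
  finally show ?thesis by (rule path_homotopic_sym)
qed

lemma path_homotopic_difference_edge:
  assumes pq: "path_homotopic T p (edge_path x0 x0 +++ (q +++ edge_path y x))"
    and q: "pathin T q" "q 0 = vtx x0" "q 1 = vtx y" and e: "pathin T (edge_path x y)"
  shows "path_homotopic T (reversepath p +++ q) (edge_path x y)"
proof -
  let ?e = "edge_path x y"
  have e': "pathin T (edge_path y x)" using pathin_reverse[OF e] by (simp add: reversepath_edge_path)
  have qe: "pathin T (q +++ edge_path y x)" by (rule pathin_join[OF q(1) e']) (simp add: q)
  have p0: "p 0 = vtx x0" using path_homotopic_imp[OF pq] by (simp add: joinpaths_def)
  note pq
  also have "path_homotopic T (edge_path x0 x0 +++ (q +++ edge_path y x)) (q +++ edge_path y x)"
    using path_homotopic_lunit[OF qe] by (simp add: edge_path_refl joinpaths_def q)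
  finally have "path_homotopic T (reversepath p) (reversepath (q +++ edge_path y x))"
    by (rule path_homotopic_reverse)
  also have "reversepath (q +++ edge_path y x) = ?e +++ reversepath q"
    using reversepath_joinpaths[of q "edge_path y x"]
    by (simp add: pathfinish_def pathstart_def q reversepath_edge_path)
  finally have "path_homotopic T (reversepath p +++ q) ((?e +++ reversepath q) +++ q)"
    by (rule path_homotopic_join[OF _ path_homotopic_refl[OF q(1)]]) (simp add: reversepath_def p0 q)
  also have "path_homotopic T \<dots> (?e +++ (reversepath q +++ q))"
    by (rule path_homotopic_assoc[OF e pathin_reverse[OF q(1)] q(1)]) (simp_all add: reversepath_def q)
  also have "path_homotopic T \<dots> (?e +++ (\<lambda>t. q 1))"
    by (rule path_homotopic_join[OF path_homotopic_refl[OF e] path_homotopic_linv[OF q(1)]])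
      (simp add: q joinpaths_def reversepath_def)
  also have "path_homotopic T \<dots> ?e"
    using path_homotopic_runit[OF e] by (simp add: q)
  finally show ?thesis .
qed

lemma is_short_rep:
  assumes "is_short F s x y" "entourage F"
  shows "path_homotopic (rips F) (gp_rep s F) (edge_path x y)"
proof -
  have s: "is_gpath s x y" using assms by (simp add: is_short_def)
  obtain r where "r \<in> s F" "path_homotopic (rips F) r (edge_path x y)"
    using assms(1) by (auto simp: is_short_def rips_homotopic_eq)
  then show ?thesis
    using gpath_members_homotopic[OF s assms(2) gp_rep_in[OF s assms(2)]] path_homotopic_trans by blast
qed

lemma gcat_short_close:
  assumes c: "is_gpath c x0 x" and s: "is_short F s x y" and F: "entourage F"
  shows "(c, gcat c s) \<in> GP_star F"
proof -
  have s_path: "is_gpath s x y" and xy: "(x, y) \<in> F" using s by (simp_all add: is_short_def)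
  let ?p = "gp_rep c F"
  have p: "pathin (rips F) ?p" "?p 0 = vtx x0" "?p 1 = vtx x" using gp_rep[OF c F] by simp_all
  have r: "gp_rep s F 0 = vtx x" "gp_rep s F 1 = vtx y" using gp_rep[OF s_path F] by simp_all
  have "path_homotopic (rips F) ?p (edge_path x0 x0 +++ ((?p +++ gp_rep s F) +++ edge_path y x))"
    by (rule path_homotopic_append_edge[OF p is_short_rep[OF s F] pathin_edge_path[OF F xy]])
  moreover have "(x0, x0) \<in> F" using F by (auto simp: entourage_def)
  ultimately have "E_homotopic F ?p (?p +++ gp_rep s F)"
    unfolding E_homotopic_def rips_homotopic_eq using xy p r
    by (intro exI[of _ x0] exI[of _ x] exI[of _ y]) (simp add: joinpaths_def)
  moreover have "is_gpath (gcat c s) x0 y" by (rule is_gpath_gcat[OF c s_path])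
  ultimately show ?thesis
    unfolding GP_star_def GP_def using c gp_rep_in[OF c F] gcat_in[OF c s_path F] by blast
qed

lemma close_gpaths:
  assumes c: "is_gpath c x0 x" and d: "is_gpath d x0 y" and F: "entourage F"
    and cd: "(c, d) \<in> GP_star F"
  obtains p q where "p \<in> c F" "q \<in> d F" "(x, y) \<in> F"
    "path_homotopic (rips F) p (edge_path x0 x0 +++ (q +++ edge_path y x))"
proof -
  obtain p q where pq: "p \<in> c F" "q \<in> d F" and "E_homotopic F p q"
    using cd unfolding GP_star_def by blast
  then obtain xc xd yc yd where ends: "p 0 = vtx xc" "q 0 = vtx xd" "p 1 = vtx yc" "q 1 = vtx yd"
      and "(yc, yd) \<in> F"
      and hom: "path_homotopic (rips F) p (edge_path xc xd +++ (q +++ edge_path yd yc))"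
    unfolding E_homotopic_def rips_homotopic_eq by blast
  moreover have "xc = x0" "xd = x0" "yc = x" "yd = y"
    using ends gpath_member[OF c F pq(1)] gpath_member[OF d F pq(2)] vtx_inject by metis+
  ultimately show ?thesis using that pq by blast
qed

lemma close_gpaths_short:
  assumes c: "is_gpath c x0 x" and d: "is_gpath d x0 y" and E: "entourage E"
    and cd: "(c, d) \<in> GP_star E"
  shows "is_short E (gcat (ginv c) d) x y"
proof -
  obtain p q where pq: "p \<in> c E" "q \<in> d E" and xy: "(x, y) \<in> E"
    and hom: "path_homotopic (rips E) p (edge_path x0 x0 +++ (q +++ edge_path y x))"
    using close_gpaths[OF c d E cd] by blast
  have q: "pathin (rips E) q" "q 0 = vtx x0" "q 1 = vtx y" using gpath_member[OF d E pq(2)] by simp_all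
  have c': "is_gpath (ginv c) x x0" by (rule is_gpath_ginv[OF c])
  let ?r = "gp_rep (ginv c) E" and ?s = "gp_rep d E"
  have "path_homotopic (rips E) ?r (reversepath p)"
    using gp_rep_ginv[OF c E] path_homotopic_reverse[OF gpath_members_homotopic[OF c E gp_rep_in[OF c E] pq(1)]]
    by (rule path_homotopic_trans)
  then have "path_homotopic (rips E) (?r +++ ?s) (reversepath p +++ q)"
    using gpath_members_homotopic[OF d E gp_rep_in[OF d E] pq(2)] gp_rep[OF c' E] gp_rep[OF d E]
    by (intro path_homotopic_join) auto
  also have "path_homotopic (rips E) \<dots> (edge_path x y)"
    by (rule path_homotopic_difference_edge[OF hom q pathin_edge_path[OF E xy]])
  finally show ?thesis
    unfolding is_short_def rips_homotopic_eq
    using is_gpath_gcat[OF c' d] xy gcat_in[OF c' d E] by blast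
qed

section \<open>The end-point map and uniform joinability\<close>

text \<open>In a chain connected, uniformly joinable space every point is reached from x0 by a
  generalized path: concatenate UNIV-short paths along an F-chain from x0.\<close>
lemma gpath_exists:
  assumes "chain_connected TYPE('a::uniform_space)" "uniformly_joinable TYPE('a)"
  shows "\<exists>c. is_gpath c (x0::'a) y"
proof -
  obtain F :: "('a \<times> 'a) set" where F: "entourage F" "\<And>x y. (x, y) \<in> F \<Longrightarrow> \<exists>c. is_short UNIV c x y"
    using assms(2) entourage_UNIV unfolding uniformly_joinable_def by blast
  have "(x0, y) \<in> F\<^sup>*" using assms(1) F(1) unfolding chain_connected_def by blast
  then show ?thesis
  proof (induction rule: rtrancl_induct)
    case base
    show ?case using is_gpath_gconst by blast
  next
    case (step z w)
    then obtain c s where "is_gpath c x0 z" "is_short UNIV s z w" using F(2) by blast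
    then have "is_gpath (gcat c s) x0 w" by (intro is_gpath_gcat) (auto simp: is_short_def)
    then show ?case by blast
  qed
qed

lemma pi_imageI:
  assumes "is_gpath c x0 x" "is_gpath d x0 y" "(c, d) \<in> GP_star F"
  shows "(x, y) \<in> pi_image x0 F"
  using assms gp_end_eq[OF assms(1)] gp_end_eq[OF assms(2)]
  unfolding pi_image_def GP_at_def by blast

lemma pi_imageE:
  assumes "(x, y) \<in> pi_image x0 F"
  obtains c d where "is_gpath c x0 x" "is_gpath d x0 y" "(c, d) \<in> GP_star F"
proof -
  obtain c d x' y' where "(x, y) = (gp_end c, gp_end d)" "is_gpath c x0 x'" "is_gpath d x0 y'"
    "(c, d) \<in> GP_star F"
    using assms unfolding pi_image_def GP_at_def by blast
  moreover from this have "x' = x" "y' = y" using gp_end_eq by auto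
  ultimately show ?thesis using that by blast
qed

lemma pi_image_subset: "entourage F \<Longrightarrow> pi_image x0 F \<subseteq> F"
  by (auto elim!: pi_imageE elim: close_gpaths)

text \<open>Every member of the uniformity contains an entourage, namely its symmetric part.\<close>
lemma entourage_inside:
  assumes "eventually (\<lambda>z. z \<in> U) uniformity"
  obtains G where "entourage G" "G \<subseteq> U"
proof
  let ?G = "{z. z \<in> U \<and> (snd z, fst z) \<in> U}"
  have "eventually (\<lambda>z. z \<in> ?G) uniformity"
    using eventually_conj[OF assms uniformity_sym[OF assms]] by (simp add: case_prod_beta)
  moreover from this have "Id \<subseteq> ?G" using uniformity_refl by auto
  ultimately show "entourage ?G" unfolding entourage_def sym_def by auto
qed auto

text \<open>(a) implies (b): surjectivity comes from chain connectedness; pi_X(F^*) lies in F,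
  and contains the entourage of pairs joined by F-short generalized paths.\<close>
lemma joinable_imp_pi_generates:
  assumes CC: "chain_connected TYPE('a::uniform_space)" and UJ: "uniformly_joinable TYPE('a)"
  shows "pi_generates (x0::'a)"
  unfolding pi_generates_def
proof (intro conjI allI impI)
  have "y \<in> gp_end ` GP_at x0" for y
  proof -
    obtain c where "is_gpath c x0 y" using gpath_exists[OF CC UJ] by blast
    then show ?thesis using gp_end_eq unfolding GP_at_def by force
  qed
  then show "gp_end ` GP_at x0 = UNIV" by blast
next
  fix E :: "('a \<times> 'a) set" assume "entourage E"
  then show "\<exists>F. entourage F \<and> pi_image x0 F \<subseteq> E" using pi_image_subset by blast
next
  fix F :: "('a \<times> 'a) set" assume F: "entourage F"
  then obtain G where G: "entourage G" "\<And>x y. (x, y) \<in> G \<Longrightarrow> \<exists>s. is_short F s x y"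
    using UJ unfolding uniformly_joinable_def by blast
  have "(x, y) \<in> pi_image x0 F" if xy: "(x, y) \<in> G" for x y
  proof -
    obtain c where c: "is_gpath c x0 x" using gpath_exists[OF CC UJ] by blast
    obtain s where s: "is_short F s x y" using G(2)[OF xy] by blast
    have "is_gpath (gcat c s) x0 y" using is_gpath_gcat[OF c] s by (simp add: is_short_def)
    with c show ?thesis using gcat_short_close[OF c s F] by (rule pi_imageI)
  qed
  then show "eventually (\<lambda>z. z \<in> pi_image x0 F) uniformity"
    using G(1) by (auto simp: entourage_def elim: eventually_mono)
qed

text \<open>(c) implies (a): if pi_X(E^*) is a member of the uniformity, the entourage inside it
  consists of pairs joined by E-short generalized paths.\<close>
lemma pi_generates_imp_joinable:
  assumes "pi_generates (x0::'a::uniform_space)"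
  shows "uniformly_joinable TYPE('a)"
  unfolding uniformly_joinable_def
proof (intro allI impI)
  fix E :: "('a \<times> 'a) set" assume E: "entourage E"
  then have "eventually (\<lambda>z. z \<in> pi_image x0 E) uniformity"
    using assms unfolding pi_generates_def by blast
  then obtain G where "entourage G" "G \<subseteq> pi_image x0 E" by (rule entourage_inside)
  moreover have "\<exists>s. is_short E s x y" if "(x, y) \<in> pi_image x0 E" for x y
    using that by (auto elim!: pi_imageE dest: close_gpaths_short[OF _ _ E])
  ultimately show "\<exists>F. entourage F \<and> (\<forall>x y. (x, y) \<in> F \<longrightarrow> (\<exists>s. is_short E s x y))" by blast
qed

theorem mainTheorem7:
  assumes "chain_connected TYPE('a::uniform_space)"
  shows "(uniformly_joinable TYPE('a) \<longleftrightarrow> (\<forall>x0::'a. pi_generates x0))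
     \<and> ((\<forall>x0::'a. pi_generates x0) \<longleftrightarrow> (\<exists>x0::'a. pi_generates x0))"
  using joinable_imp_pi_generates[OF assms] pi_generates_imp_joinable by blast

end
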